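(* Let $R$ be a commutative ring with nonzero identity, let $\delta$ be an expansion of ideals of $R$, and let $I$ be a proper ideal of $R$. The following statements are equivalent: (1) $I$ is a $\delta$-$n$-ideal of $R$. (2) $(I:a)\subseteq\sqrt{0}$ for all $a\in R\setminus\delta(I)$. (3) If $aJ\subseteq I$ for some $a\in R$ and some ideal $J$ of $R$, then $a\in\sqrt{0}$ or $J\subseteq\delta(I)$. (4) If $JK\subseteq I$ for some ideals $J,K$ of $R$, then $J\cap(R\setminus\sqrt{0})=\emptyset$ or $K\subseteq\delta(I)$.
   Context: An expansion of ideals of a ring $R$ is a map $\delta$ from the set of ideals of $R$ to itself such that $I\subseteq\delta(I)$ for every ideal $I$, and $\delta(I)\subseteq\delta(J)$ whenever $I\subseteq J$. $\sqrt{0}$ denotes the nilradical of $R$, and $(I:a)=\{r\in R: ra\in I\}$. Given an expansion $\delta$, a proper ideal $I$ of $R$ is a $\delta$-$n$-ideal if whenever $a,b\in R$ with $ab\in I$ and $a\notin\sqrt{0}$, then $b\in\delta(I)$. *)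

theory Defs
  imports "HOL-Algebra.Ideal_Product"
begin

definition nilrad :: "('a, 'b) ring_scheme \<Rightarrow> 'a set" where
  "nilrad R = {a \<in> carrier R. \<exists>n::nat. a [^]\<^bsub>R\<^esub> n = \<zero>\<^bsub>R\<^esub>}"

definition colon :: "('a, 'b) ring_scheme \<Rightarrow> 'a set \<Rightarrow> 'a \<Rightarrow> 'a set" where
  "colon R I a = {r \<in> carrier R. r \<otimes>\<^bsub>R\<^esub> a \<in> I}"

definition expansion :: "('a, 'b) ring_scheme \<Rightarrow> ('a set \<Rightarrow> 'a set) \<Rightarrow> bool" where
  "expansion R \<delta> \<longleftrightarrow>
     (\<forall>I. ideal I R \<longrightarrow> ideal (\<delta> I) R \<and> I \<subseteq> \<delta> I) \<and>
     (\<forall>I J. ideal I R \<longrightarrow> ideal J R \<longrightarrow> I \<subseteq> J \<longrightarrow> \<delta> I \<subseteq> \<delta> J)"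

definition delta_n_ideal :: "('a, 'b) ring_scheme \<Rightarrow> ('a set \<Rightarrow> 'a set) \<Rightarrow> 'a set \<Rightarrow> bool" where
  "delta_n_ideal R \<delta> I \<longleftrightarrow> ideal I R \<and> I \<noteq> carrier R \<and>
     (\<forall>a \<in> carrier R. \<forall>b \<in> carrier R.
        a \<otimes>\<^bsub>R\<^esub> b \<in> I \<longrightarrow> a \<notin> nilrad R \<longrightarrow> b \<in> \<delta> I)"

end

theory Submission
  imports Defs
begin

text \<open>All four conditions say that \<open>a b \<in> I\<close> with \<open>a\<close> not nilpotent forces \<open>b \<in> \<delta>(I)\<close>;
  conditions (3) and (4) reduce to this by taking \<open>J = (b)\<close>, resp. \<open>J = (a)\<close> and \<open>K = (b)\<close>,
  since \<open>a(b) = (a)(b) = (ab) \<subseteq> I\<close>. Nothing about \<open>\<delta>(I)\<close> beyond its being a set is used.\<close>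

lemma (in cring) image_mult_cgenideal:
  assumes "a \<in> carrier R" and "b \<in> carrier R"
  shows "(\<lambda>j. a \<otimes> j) ` (PIdl b) = PIdl (a \<otimes> b)"
proof -
  have "a \<otimes> (x \<otimes> b) = x \<otimes> (a \<otimes> b)" if "x \<in> carrier R" for x
    using that assms by (simp add: m_lcomm)
  then show ?thesis
    unfolding cgenideal_def by force
qed

lemma (in cring) ideal_prod_cgenideal:
  assumes "a \<in> carrier R" and "b \<in> carrier R"
  shows "(PIdl a) \<cdot> (PIdl b) = PIdl (a \<otimes> b)"
proof -
  have ab: "ideal (PIdl (a \<otimes> b)) R"
    using assms by (simp add: cgenideal_ideal)
  have "(PIdl a) \<cdot> (PIdl b) = Idl (PIdl (a \<otimes> b))"
    using assms ideal_prod_eq_genideal cgenideal_ideal cgenideal_prod by simp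
  also have "\<dots> = PIdl (a \<otimes> b)"
    using ab by (simp add: genideal_minimal genideal_self ideal.Icarr subset_antisym subsetI)
  finally show ?thesis .
qed

lemma colon_subset_nilrad_iff:
  "(\<forall>a \<in> carrier R - D. colon R I a \<subseteq> nilrad R) \<longleftrightarrow>
   (\<forall>a \<in> carrier R. \<forall>b \<in> carrier R. a \<otimes>\<^bsub>R\<^esub> b \<in> I \<longrightarrow> a \<notin> nilrad R \<longrightarrow> b \<in> D)"
  unfolding colon_def by blast

lemma (in cring) mult_ideal_subset_dichotomy_iff:
  assumes "ideal I R"
  shows "(\<forall>a \<in> carrier R. \<forall>J. ideal J R \<longrightarrow> (\<lambda>j. a \<otimes> j) ` J \<subseteq> I \<longrightarrow> a \<in> nilrad R \<or> J \<subseteq> D) \<longleftrightarrow>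
         (\<forall>a \<in> carrier R. \<forall>b \<in> carrier R. a \<otimes> b \<in> I \<longrightarrow> a \<notin> nilrad R \<longrightarrow> b \<in> D)"
    (is "?ideals \<longleftrightarrow> ?elements")
proof
  assume ?ideals
  show ?elements
  proof (intro ballI impI)
    fix a b assume ab: "a \<in> carrier R" "b \<in> carrier R" "a \<otimes> b \<in> I" and "a \<notin> nilrad R"
    have "(\<lambda>j. a \<otimes> j) ` (PIdl b) \<subseteq> I"
      using ab assms by (simp add: image_mult_cgenideal cgenideal_minimal)
    with \<open>?ideals\<close> \<open>a \<notin> nilrad R\<close> ab have "PIdl b \<subseteq> D"
      using cgenideal_ideal by blast
    then show "b \<in> D"
      using ab cgenideal_self by blast
  qed
next
  assume ?elements
  show ?ideals
  proof (intro ballI allI impI)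
    fix a J assume "a \<in> carrier R" "ideal J R" and aJ: "(\<lambda>j. a \<otimes> j) ` J \<subseteq> I"
    have "J \<subseteq> D" if "a \<notin> nilrad R"
    proof
      fix j assume "j \<in> J"
      then have "j \<in> carrier R" and "a \<otimes> j \<in> I"
        using \<open>ideal J R\<close> aJ ideal.Icarr by auto
      then show "j \<in> D"
        using \<open>?elements\<close> \<open>a \<in> carrier R\<close> that by blast
    qed
    then show "a \<in> nilrad R \<or> J \<subseteq> D"
      by blast
  qed
qed

lemma (in cring) ideal_prod_subset_dichotomy_iff:
  assumes "ideal I R"
  shows "(\<forall>J K. ideal J R \<longrightarrow> ideal K R \<longrightarrow> J \<cdot> K \<subseteq> I \<longrightarrow>
            J \<inter> (carrier R - nilrad R) = {} \<or> K \<subseteq> D) \<longleftrightarrow>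
         (\<forall>a \<in> carrier R. \<forall>b \<in> carrier R. a \<otimes> b \<in> I \<longrightarrow> a \<notin> nilrad R \<longrightarrow> b \<in> D)"
    (is "?ideals \<longleftrightarrow> ?elements")
proof
  assume ?ideals
  show ?elements
  proof (intro ballI impI)
    fix a b assume ab: "a \<in> carrier R" "b \<in> carrier R" "a \<otimes> b \<in> I" and "a \<notin> nilrad R"
    have "(PIdl a) \<cdot> (PIdl b) \<subseteq> I"
      using ab assms by (simp add: ideal_prod_cgenideal cgenideal_minimal)
    moreover have "a \<in> PIdl a \<inter> (carrier R - nilrad R)"
      using ab \<open>a \<notin> nilrad R\<close> cgenideal_self by blast
    ultimately have "PIdl b \<subseteq> D"
      using \<open>?ideals\<close> ab cgenideal_ideal by blast
    then show "b \<in> D"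
      using ab cgenideal_self by blast
  qed
next
  assume ?elements
  show ?ideals
  proof (intro allI impI)
    fix J K assume "ideal J R" "ideal K R" and JK: "J \<cdot> K \<subseteq> I"
    have "K \<subseteq> D" if "j \<in> J \<inter> (carrier R - nilrad R)" for j
    proof
      fix k assume "k \<in> K"
      then have "j \<otimes> k \<in> I" and "k \<in> carrier R"
        using JK that ideal_prod.prod[of j J k K R] ideal.Icarr[OF \<open>ideal K R\<close>] by auto
      then show "k \<in> D"
        using \<open>?elements\<close> that by blast
    qed
    then show "J \<inter> (carrier R - nilrad R) = {} \<or> K \<subseteq> D"
      by blast
  qed
qed

theorem theorem2p7:
  fixes R :: "('a, 'b) ring_scheme" and \<delta> :: "'a set \<Rightarrow> 'a set" and I :: "'a set"
  assumes "cring R" and "\<one>\<^bsub>R\<^esub> \<noteq> \<zero>\<^bsub>R\<^esub>"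
    and "expansion R \<delta>"
    and "ideal I R" and "I \<noteq> carrier R"
  defines "P1 \<equiv> delta_n_ideal R \<delta> I"
    and "P2 \<equiv> (\<forall>a \<in> carrier R - \<delta> I. colon R I a \<subseteq> nilrad R)"
    and "P3 \<equiv> (\<forall>a \<in> carrier R. \<forall>J. ideal J R \<longrightarrow> (\<lambda>j. a \<otimes>\<^bsub>R\<^esub> j) ` J \<subseteq> I \<longrightarrow>
                 a \<in> nilrad R \<or> J \<subseteq> \<delta> I)"
    and "P4 \<equiv> (\<forall>J K. ideal J R \<longrightarrow> ideal K R \<longrightarrow> J \<cdot>\<^bsub>R\<^esub> K \<subseteq> I \<longrightarrow>
                 J \<inter> (carrier R - nilrad R) = {} \<or> K \<subseteq> \<delta> I)"
  shows "(P1 \<longleftrightarrow> P2) \<and> (P1 \<longleftrightarrow> P3) \<and> (P1 \<longleftrightarrow> P4)"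
proof -
  let ?elements = "\<forall>a \<in> carrier R. \<forall>b \<in> carrier R.
                     a \<otimes>\<^bsub>R\<^esub> b \<in> I \<longrightarrow> a \<notin> nilrad R \<longrightarrow> b \<in> \<delta> I"
  have "P1 \<longleftrightarrow> ?elements"
    using \<open>ideal I R\<close> \<open>I \<noteq> carrier R\<close> unfolding P1_def delta_n_ideal_def by simp
  moreover have "P2 \<longleftrightarrow> ?elements"
    unfolding P2_def by (rule colon_subset_nilrad_iff)
  moreover have "P3 \<longleftrightarrow> ?elements"
    unfolding P3_def by (rule cring.mult_ideal_subset_dichotomy_iff[OF \<open>cring R\<close> \<open>ideal I R\<close>])
  moreover have "P4 \<longleftrightarrow> ?elements"
    unfolding P4_def by (rule cring.ideal_prod_subset_dichotomy_iff[OF \<open>cring R\<close> \<open>ideal I R\<close>])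
  ultimately show ?thesis
    by blast
qed

end
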